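(* Let $\mathcal{R}$ be a left-linear conditional term rewriting system, $\mathcal{A}$ a lattice tree automaton and $E$ a set of linear (approximation) equations. If the completion of $\mathcal{A}$ by $\mathcal{R}$ and $E$ terminates on an automaton $\mathcal{A}^*_{\mathcal{R},E}$, then $\mathcal{L}(\mathcal{A}^*_{\mathcal{R},E})\supseteq\mathcal{R}^*(\mathcal{L}(\mathcal{A}))$.
   Context: Domains and terms. A concrete domain $\mathcal{D}$ with interpreted symbols $\mathcal{F}_\bullet=\mathcal{D}\cup OP$ (elements of $\mathcal{D}$ as constants, operations $OP$ on $\mathcal{D}$) and passive (uninterpreted) symbols $\mathcal{F}_\circ$; $eval$ simplifies terms over $\mathcal{F}_\bullet$ to elements of $\mathcal{D}$ and extends homomorphically to other terms. The concrete domain is abstracted (Galois connection, abstraction $\alpha$) by an atomic lattice $\Lambda$, whose atoms correspond to concrete values; abstract interpreted symbols are $\mathcal{F}_\bullet^{\#}=\Lambda\cup OP^{\#}\cup\{\sqcup,\sqcap\}$ with abstract evaluation into $\Lambda$. Lattice tree automaton (LTA) $\langle\mathcal{F},\mathcal{Q},\mathcal{Q}_f,\Delta\rangle$, $\mathcal{F}=\mathcal{F}_\circ\cup\mathcal{F}_\bullet^{\#}$: finite states, final states, normalized transitions $f(q_1,\dots,q_n)\to q$ including lambda transitions $\lambda\to q$ ($\lambda\in\Lambda$). Runs: a subterm over interpreted symbols whose evaluation is $\sqsubseteq\lambda$ reduces to $q$ if $\lambda\to q\in\Delta$; $f(q_1..q_n)\to q$ rewrites as usual. The term order $\sqsubseteq$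 compares interpreted subterms by evaluation and passive symbols structurally. $\mathcal{L}(\mathcal{A},q)$: ground terms $t$ (passive symbols, operations, atoms of $\Lambda$) such that some $t'\sqsupseteq t$ satisfies $t'\to^*_{\mathcal{A}}q$; $\mathcal{L}(\mathcal{A})$ the union over final states. Conditional TRS. Rules $l\to r\Leftarrow c_1\wedge\dots\wedge c_n$ with $l$ a non-variable term over passive symbols and variables, $r$ a term over $\mathcal{F}_\circ\cup\mathcal{F}_\bullet$ and variables, $\mathit{Var}(r)\subseteq\mathit{Var}(l)$, each $c_i=\rho_i(t_1,\dots,t_m)$ with $\rho_i$ a predicate on $\mathcal{D}^m$ and $t_j$ terms over interpreted symbols and variables of $l$; a predicate evaluates its arguments with $eval$ and is false if some argument is not a term over interpreted symbols. Left-linear: each variable occurs at most once in $l$. Rewriting: $s\to_{\mathcal{R}}t$ iff there are a rule, a position $p$ and a ground substitution $\sigma$ with $s|_p=l\sigma$, all $c_i\sigma$ true, and $t=eval(s[r\sigma]_p)$. $\mathcal{R}^*(L)$ is the set of terms reachable from $L$ by $\to^*_{\mathcal{R}}$. Completion. For a rule $rl=l\to r\Leftarrow c$ and state $q$: $Matching(l,\mathcal{A},q)$ returns the substitutions $\sigma$ from variables to states with $l\sigma\to^*_{\mathcal{A}}q$; a solver $Solve(\sigma,\mathcal{A},c)$ restricts the constrained variables to lattice elements, over-approximating the solutions of $c$; $\Omega(\mathcal{A},rl,q)=\{\sigma'\mid\sigma\in Matching(l,\mathcal{A},q),\ \sigma'\in Solve(\sigma,\mathcal{A},c),\ \nexists\sigma'':\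 r\sigma'\sqsubseteq r\sigma''\to^*_{\mathcal{A}}q\}$. $Norm(s\to^*q)$ turns $s\to q$ into normalized transitions (concrete constants $d$ become $\alpha(d)\to q$, subterms get existing states recognizing them or new states). The one-step completed automaton ${\cal C}_{\mathcal{R}}(\mathcal{A})$ adds, for every rule, state $q$ and $\sigma\in\Omega(\mathcal{A},rl,q)$, the transitions $Norm(r\sigma\to^* q')\cup\{q'\to q\}$ with $q'$ a new state. $\leadsto^!_E$ merges (replacing one state by the other everywhere) any states $q,q'$ such that for some equation $u=v\Leftarrow c$ of $E$ and substitution $\sigma$, $u\sigma\to^*q$, $v\sigma\to^*q'$ and $c$ is satisfiable. $eval(\mathcal{A})$ closes the transition set under the rule: if $f(q_1..q_k)\to q$ with $f$ an interpreted operation and $\lambda_i\to^* q_i$, add $eval(f(\lambda_1..\lambda_k))\to q$ unless some $\lambda\to q$ already covers it (a widening operator on $\Lambda$ may be used to make this terminate, which only enlarges lattice elements). The completion sequence is $\mathcal{A}^0_{\mathcal{R},E}=\mathcal{A}$, and $\mathcal{A}^{n+1}_{\mathcal{R},E}=eval(\mathcal{A}'')$ where ${\cal C}_{\mathcal{R}}(eval(\mathcal{A}^n_{\mathcal{R},E}))\leadsto^!_E\mathcal{A}''$; completion terminates if $\mathcal{A}^{k+1}_{\mathcal{R},E}=\mathcal{A}^k_{\mathcal{R},E}$ for some $k$, and then $\mathcal{A}^*_{\mathcal{R},E}=\mathcal{A}^k_{\mathcal{R},E}$. *)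

theory Defs
  imports Main
begin

section \<open>Terms\<close>

text \<open>One term datatype serves for concrete terms (constants 'c = concrete values 'd,
  operation symbols 'o, variables 'v) and for abstract configurations
  (constants 'c = lattice elements 'l, operation symbols 'o absop = OP# plus join/meet,
  leaves V q = automaton states).  Fn = passive_trm (uninterpreted) symbols,
  Op = interpreted operations, Cn = interpreted constants.\<close>

datatype ('f,'o,'c,'v) trm =
    V 'v
  | Fn 'f "('f,'o,'c,'v) trm list"
  | Op 'o "('f,'o,'c,'v) trm list"
  | Cn 'c

datatype 'o absop = AOp 'o | AJoin | AMeet

fun vars :: "('f,'o,'c,'v) trm \<Rightarrow> 'v set" where
  "vars (V x) = {x}"
| "vars (Fn f ts) = (\<Union>t\<in>set ts. vars t)"
| "vars (Op g ts) = (\<Union>t\<in>set ts. vars t)"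
| "vars (Cn c) = {}"

definition ground :: "('f,'o,'c,'v) trm \<Rightarrow> bool" where
  "ground t \<longleftrightarrow> vars t = {}"

fun subst :: "('v \<Rightarrow> ('f,'o,'c,'w) trm) \<Rightarrow> ('f,'o,'c,'v) trm \<Rightarrow> ('f,'o,'c,'w) trm" where
  "subst \<sigma> (V x) = \<sigma> x"
| "subst \<sigma> (Fn f ts) = Fn f (map (subst \<sigma>) ts)"
| "subst \<sigma> (Op g ts) = Op g (map (subst \<sigma>) ts)"
| "subst \<sigma> (Cn c) = Cn c"

fun is_C :: "('f,'o,'c,'v) trm \<Rightarrow> bool" where
  "is_C (Cn c) = True"
| "is_C _ = False"

fun cval :: "('f,'o,'c,'v) trm \<Rightarrow> 'c" where
  "cval (Cn c) = c"
| "cval _ = undefined"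

fun passive_trm :: "('f,'o,'c,'v) trm \<Rightarrow> bool" where
  "passive_trm (V x) = True"
| "passive_trm (Fn f ts) = (\<forall>t\<in>set ts. passive_trm t)"
| "passive_trm (Op g ts) = False"
| "passive_trm (Cn c) = False"

fun nopassive_trm :: "('f,'o,'c,'v) trm \<Rightarrow> bool" where
  "nopassive_trm (V x) = True"
| "nopassive_trm (Fn f ts) = False"
| "nopassive_trm (Op g ts) = (\<forall>t\<in>set ts. nopassive_trm t)"
| "nopassive_trm (Cn c) = True"

fun interp :: "('f,'o,'c,'v) trm \<Rightarrow> bool" where
  "interp (V x) = False"
| "interp (Fn f ts) = False"
| "interp (Op g ts) = (\<forall>t\<in>set ts. interp t)"
| "interp (Cn c) = True"

fun linear :: "('f,'o,'c,'v) trm \<Rightarrow> bool" where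
  "linear (V x) = True"
| "linear (Fn f ts) = ((\<forall>t\<in>set ts. linear t) \<and>
      (\<forall>i j. i < j \<and> j < length ts \<longrightarrow> vars (ts!i) \<inter> vars (ts!j) = {}))"
| "linear (Op g ts) = ((\<forall>t\<in>set ts. linear t) \<and>
      (\<forall>i j. i < j \<and> j < length ts \<longrightarrow> vars (ts!i) \<inter> vars (ts!j) = {}))"
| "linear (Cn c) = True"

section \<open>Concrete domain and its lattice abstraction\<close>

text \<open>alpha d is the abstraction alpha({d}) of a single concrete value; the Galois
  connection is alpha(S) = Sup (alpha ` S), gamma(l) = {d. alpha d \<le> l}.\<close>
record ('d,'o,'l) absdom =
  alpha :: "'d \<Rightarrow> 'l"
  opc :: "'o \<Rightarrow> 'd list \<Rightarrow> 'd"
  opa :: "'o \<Rightarrow> 'l list \<Rightarrow> 'l"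

definition atom :: "'l::complete_lattice \<Rightarrow> bool" where
  "atom a \<longleftrightarrow> a \<noteq> bot \<and> (\<forall>b. b \<le> a \<longrightarrow> b = bot \<or> b = a)"

definition valid_dom :: "('d,'o,'l::complete_lattice) absdom \<Rightarrow> bool" where
  "valid_dom D \<longleftrightarrow>
     (\<forall>l::'l. l \<noteq> bot \<longrightarrow> (\<exists>a. atom a \<and> a \<le> l)) \<and>
     inj (alpha D) \<and> (\<forall>d. atom (alpha D d)) \<and> (\<forall>a. atom a \<longrightarrow> a \<in> range (alpha D)) \<and>
     (\<forall>g ds ls. length ds = length ls \<and> (\<forall>i<length ds. alpha D (ds!i) \<le> ls!i)
        \<longrightarrow> alpha D (opc D g ds) \<le> opa D g ls)"

fun ceval :: "('d,'o,'l) absdom \<Rightarrow> ('f,'o,'d,'v) trm \<Rightarrow> ('f,'o,'d,'v) trm" where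
  "ceval D (V x) = V x"
| "ceval D (Fn f ts) = Fn f (map (ceval D) ts)"
| "ceval D (Op g ts) = (if (\<forall>t\<in>set ts. is_C (ceval D t))
      then Cn (opc D g (map (\<lambda>t. cval (ceval D t)) ts))
      else Op g (map (ceval D) ts))"
| "ceval D (Cn d) = Cn d"

fun aeval :: "('d,'o,'l::complete_lattice) absdom \<Rightarrow> ('f,'o absop,'l,'q) trm \<Rightarrow> 'l" where
  "aeval D (Cn l) = l"
| "aeval D (Op (AOp g) ts) = opa D g (map (aeval D) ts)"
| "aeval D (Op AJoin ts) = Sup (set (map (aeval D) ts))"
| "aeval D (Op AMeet ts) = Inf (set (map (aeval D) ts))"
| "aeval D (V q) = bot"
| "aeval D (Fn f ts) = bot"

fun absT :: "('d,'o,'l) absdom \<Rightarrow> ('v \<Rightarrow> ('f,'o absop,'l,'q) trm) \<Rightarrow> ('f,'o,'d,'v) trm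
     \<Rightarrow> ('f,'o absop,'l,'q) trm" where
  "absT D \<phi> (V x) = \<phi> x"
| "absT D \<phi> (Fn f ts) = Fn f (map (absT D \<phi>) ts)"
| "absT D \<phi> (Op g ts) = Op (AOp g) (map (absT D \<phi>) ts)"
| "absT D \<phi> (Cn d) = Cn (alpha D d)"

inductive tle :: "('d,'o,'l::complete_lattice) absdom \<Rightarrow> ('f,'o absop,'l,'q) trm
     \<Rightarrow> ('f,'o absop,'l,'q) trm \<Rightarrow> bool" for D where
  tle_interp: "interp s \<Longrightarrow> interp s' \<Longrightarrow> aeval D s \<le> aeval D s' \<Longrightarrow> tle D s s'"
| tle_V: "tle D (V q) (V q)"
| tle_F: "list_all2 (tle D) ss ss' \<Longrightarrow> tle D (Fn f ss) (Fn f ss')"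
| tle_O: "list_all2 (tle D) ss ss' \<Longrightarrow> tle D (Op g ss) (Op g ss')"

section \<open>Lattice tree automata\<close>

datatype ('f,'a,'l,'q) tr =
    TF 'f "'q list" 'q    \<comment> \<open>passive_trm symbol transition f(q1..qn) -> q\<close>
  | TO 'a "'q list" 'q
  | TL 'l 'q
  | TE 'q 'q             \<comment> \<open>epsilon transition q -> q'\<close>

record ('f,'o,'l,'q) lta =
  states :: "'q set"
  finals :: "'q set"
  trans :: "('f,'o absop,'l,'q) tr set"

fun tr_states :: "('f,'a,'l,'q) tr \<Rightarrow> 'q set" where
  "tr_states (TF f qs q) = insert q (set qs)"
| "tr_states (TO g qs q) = insert q (set qs)"
| "tr_states (TL l q) = {q}"
| "tr_states (TE q1 q2) = {q1, q2}"

definition wf_lta :: "('f,'o,'l,'q) lta \<Rightarrow> bool" where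
  "wf_lta A \<longleftrightarrow> finite (states A) \<and> finite (trans A) \<and> finals A \<subseteq> states A \<and>
     (\<forall>t\<in>trans A. tr_states t \<subseteq> states A)"

inductive run :: "('d,'o,'l::complete_lattice) absdom \<Rightarrow> ('f,'o,'l,'q) lta
     \<Rightarrow> ('f,'o absop,'l,'q) trm \<Rightarrow> 'q \<Rightarrow> bool" for D A where
  run_V: "run D A (V q) q"
| run_E: "run D A t q1 \<Longrightarrow> TE q1 q2 \<in> trans A \<Longrightarrow> run D A t q2"
| run_F: "TF f qs q \<in> trans A \<Longrightarrow> list_all2 (run D A) ts qs \<Longrightarrow> run D A (Fn f ts) q"
| run_O: "TO g qs q \<in> trans A \<Longrightarrow> list_all2 (run D A) ts qs \<Longrightarrow> run D A (Op g ts) q"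
| run_L: "TL l q \<in> trans A \<Longrightarrow> interp u \<Longrightarrow> aeval D u \<le> l \<Longrightarrow> run D A u q"

definition lang :: "('d,'o,'l::complete_lattice) absdom \<Rightarrow> ('f,'o,'l,'q) lta \<Rightarrow> 'q
     \<Rightarrow> ('f,'o,'d,'v) trm set" where
  "lang D A q = {t. ground t \<and> (\<exists>s. tle D (absT D (\<lambda>_. undefined) t) s \<and> run D A s q)}"

definition lang_A :: "('d,'o,'l::complete_lattice) absdom \<Rightarrow> ('f,'o,'l,'q) lta
     \<Rightarrow> ('f,'o,'d,'v) trm set" where
  "lang_A D A = (\<Union>q\<in>finals A. lang D A q)"

section \<open>Conditional term rewriting\<close>

type_synonym ('f,'o,'d,'v) cond = "('d list \<Rightarrow> bool) \<times> ('f,'o,'d,'v) trm list"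
type_synonym ('f,'o,'d,'v) crule =
  "('f,'o,'d,'v) trm \<times> ('f,'o,'d,'v) trm \<times> ('f,'o,'d,'v) cond list"

definition cond_holds :: "('d,'o,'l) absdom \<Rightarrow> ('v \<Rightarrow> ('f,'o,'d,'w) trm)
     \<Rightarrow> ('f,'o,'d,'v) cond \<Rightarrow> bool" where
  "cond_holds D \<theta> c \<longleftrightarrow>
     (\<forall>t\<in>set (snd c). is_C (ceval D (subst \<theta> t))) \<and>
     fst c (map (\<lambda>t. cval (ceval D (subst \<theta> t))) (snd c))"

definition conds_hold :: "('d,'o,'l) absdom \<Rightarrow> ('v \<Rightarrow> ('f,'o,'d,'w) trm)
     \<Rightarrow> ('f,'o,'d,'v) cond list \<Rightarrow> bool" where
  "conds_hold D \<theta> cs \<longleftrightarrow> (\<forall>c\<in>set cs. cond_holds D \<theta> c)"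

definition cvars :: "('f,'o,'d,'v) cond list \<Rightarrow> 'v set" where
  "cvars cs = (\<Union>c\<in>set cs. \<Union>t\<in>set (snd c). vars t)"

definition ctrs :: "('f,'o,'d,'v) crule set \<Rightarrow> bool" where
  "ctrs R \<longleftrightarrow> (\<forall>(l,r,cs)\<in>R. (\<forall>x. l \<noteq> V x) \<and> passive_trm l \<and> vars r \<subseteq> vars l \<and>
      (\<forall>c\<in>set cs. \<forall>t\<in>set (snd c). nopassive_trm t \<and> vars t \<subseteq> vars l))"

definition left_linear :: "('f,'o,'d,'v) crule set \<Rightarrow> bool" where
  "left_linear R \<longleftrightarrow> (\<forall>(l,r,cs)\<in>R. linear l)"

inductive ctx_rep :: "('f,'o,'c,'v) trm \<Rightarrow> ('f,'o,'c,'v) trm \<Rightarrow> ('f,'o,'c,'v) trm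
     \<Rightarrow> ('f,'o,'c,'v) trm \<Rightarrow> bool" for u v where
  ctx_root: "ctx_rep u v u v"
| ctx_F: "i < length ts \<Longrightarrow> ctx_rep u v (ts!i) t' \<Longrightarrow> ctx_rep u v (Fn f ts) (Fn f (ts[i := t']))"
| ctx_O: "i < length ts \<Longrightarrow> ctx_rep u v (ts!i) t' \<Longrightarrow> ctx_rep u v (Op g ts) (Op g (ts[i := t']))"

definition rstep :: "('d,'o,'l) absdom \<Rightarrow> ('f,'o,'d,'v) crule set
     \<Rightarrow> ('f,'o,'d,'w) trm \<Rightarrow> ('f,'o,'d,'w) trm \<Rightarrow> bool" where
  "rstep D R s t \<longleftrightarrow> (\<exists>l r cs \<sigma> s'. (l,r,cs) \<in> R \<and> (\<forall>x. ground (\<sigma> x)) \<and>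
      conds_hold D \<sigma> cs \<and> ctx_rep (subst \<sigma> l) (subst \<sigma> r) s s' \<and> t = ceval D s')"

definition rstar :: "('d,'o,'l) absdom \<Rightarrow> ('f,'o,'d,'v) crule set
     \<Rightarrow> ('f,'o,'d,'w) trm set \<Rightarrow> ('f,'o,'d,'w) trm set" where
  "rstar D R L = {t. \<exists>s\<in>L. (rstep D R)\<^sup>*\<^sup>* s t}"

section \<open>Completion\<close>

type_synonym ('f,'o,'d,'v) ceqn =
  "('f,'o,'d,'v) trm \<times> ('f,'o,'d,'v) trm \<times> ('f,'o,'d,'v) cond list"

definition linear_eqs :: "('f,'o,'d,'v) ceqn set \<Rightarrow> bool" where
  "linear_eqs E \<longleftrightarrow> (\<forall>(u,v,cs)\<in>E. linear u \<and> linear v)"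

definition matching :: "('d,'o,'l::complete_lattice) absdom \<Rightarrow> ('f,'o,'l,'q) lta
     \<Rightarrow> ('f,'o,'d,'v) trm \<Rightarrow> 'q \<Rightarrow> ('v \<Rightarrow> 'q) set" where
  "matching D A l q = {\<sigma>. run D A (absT D (V \<circ> \<sigma>) l) q}"

type_synonym ('f,'o,'d,'l,'q,'v) solver =
  "('v \<Rightarrow> 'q) \<Rightarrow> ('f,'o,'l,'q) lta \<Rightarrow> ('f,'o,'d,'v) cond list
     \<Rightarrow> ('v \<Rightarrow> ('f,'o absop,'l,'q) trm) set"

definition sound_solver :: "('d,'o,'l::complete_lattice) absdom \<Rightarrow> ('f,'o,'d,'l,'q,'v) solver
     \<Rightarrow> bool" where
  "sound_solver D Solve \<longleftrightarrow> (\<forall>\<sigma> A cs.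
     (\<forall>\<sigma>'\<in>Solve \<sigma> A cs. \<forall>x. if x \<in> cvars cs then (\<exists>l. \<sigma>' x = Cn l) else \<sigma>' x = V (\<sigma> x)) \<and>
     (\<forall>\<theta> :: 'v \<Rightarrow> ('f,'o,'d,'v) trm.
        (\<forall>x. ground (\<theta> x)) \<and> (\<forall>x\<in>cvars cs. \<theta> x \<in> lang D A (\<sigma> x)) \<and> conds_hold D \<theta> cs
        \<longrightarrow> (\<exists>\<sigma>'\<in>Solve \<sigma> A cs. \<forall>x\<in>cvars cs.
              \<exists>l. \<sigma>' x = Cn l \<and> alpha D (cval (ceval D (\<theta> x))) \<le> l)))"

definition omega :: "('d,'o,'l::complete_lattice) absdom \<Rightarrow> ('f,'o,'d,'l,'q,'v) solver
     \<Rightarrow> ('f,'o,'l,'q) lta \<Rightarrow> ('f,'o,'d,'v) crule \<Rightarrow> 'q \<Rightarrow> ('v \<Rightarrow> ('f,'o absop,'l,'q) trm) set" where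
  "omega D Solve A rl q = (case rl of (l,r,cs) \<Rightarrow>
     {\<sigma>'. \<exists>\<sigma>\<in>matching D A l q. \<sigma>' \<in> Solve \<sigma> A cs \<and>
        \<not> (\<exists>\<sigma>''. tle D (absT D \<sigma>' r) (absT D \<sigma>'' r) \<and> run D A (absT D \<sigma>'' r) q)})"

inductive norm :: "('d,'o,'l::complete_lattice) absdom \<Rightarrow> ('f,'o,'l,'q) lta
     \<Rightarrow> ('f,'o absop,'l,'q) trm \<Rightarrow> 'q \<Rightarrow> ('f,'o absop,'l,'q) tr set \<Rightarrow> bool" for D A where
  norm_V: "norm D A (V q) q {}"
| norm_old: "q \<in> states A \<Longrightarrow> run D A t q \<Longrightarrow> norm D A t q {}"
| norm_C: "q \<notin> states A \<Longrightarrow> norm D A (Cn l) q {TL l q}"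
| norm_F: "q \<notin> states A \<Longrightarrow> length qs = length ts \<Longrightarrow> length Ns = length ts \<Longrightarrow>
     (\<forall>i<length ts. norm D A (ts!i) (qs!i) (Ns!i)) \<Longrightarrow>
     norm D A (Fn f ts) q (insert (TF f qs q) (\<Union>(set Ns)))"
| norm_O: "q \<notin> states A \<Longrightarrow> length qs = length ts \<Longrightarrow> length Ns = length ts \<Longrightarrow>
     (\<forall>i<length ts. norm D A (ts!i) (qs!i) (Ns!i)) \<Longrightarrow>
     norm D A (Op g ts) q (insert (TO g qs q) (\<Union>(set Ns)))"

definition cpairs :: "('d,'o,'l::complete_lattice) absdom \<Rightarrow> ('f,'o,'d,'v) crule set
     \<Rightarrow> ('f,'o,'d,'l,'q,'v) solver \<Rightarrow> ('f,'o,'l,'q) lta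
     \<Rightarrow> (('f,'o,'d,'v) crule \<times> 'q \<times> ('f,'o absop,'l,'q) trm) set" where
  "cpairs D R Solve A = {(rl, q, s). rl \<in> R \<and> q \<in> states A \<and>
      (\<exists>\<sigma>'\<in>omega D Solve A rl q. s = absT D \<sigma>' (fst (snd rl)))}"

definition cstep :: "('d,'o,'l::complete_lattice) absdom \<Rightarrow> ('f,'o,'d,'v) crule set
     \<Rightarrow> ('f,'o,'d,'l,'q,'v) solver \<Rightarrow> ('f,'o,'l,'q) lta \<Rightarrow> ('f,'o,'l,'q) lta \<Rightarrow> bool" where
  "cstep D R Solve A A' \<longleftrightarrow> (\<exists>qn Ns.
     (\<forall>j\<in>cpairs D R Solve A. qn j \<notin> states A \<and> norm D A (snd (snd j)) (qn j) (Ns j)) \<and>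
     A' = \<lparr>states = states A \<union> (\<Union>j\<in>cpairs D R Solve A. insert (qn j) (\<Union>(tr_states ` Ns j))),
           finals = finals A,
           trans = trans A \<union> (\<Union>j\<in>cpairs D R Solve A. insert (TE (qn j) (fst (snd j))) (Ns j))\<rparr>)"

fun ren_tr :: "('q \<Rightarrow> 'q) \<Rightarrow> ('f,'a,'l,'q) tr \<Rightarrow> ('f,'a,'l,'q) tr" where
  "ren_tr h (TF f qs q) = TF f (map h qs) (h q)"
| "ren_tr h (TO g qs q) = TO g (map h qs) (h q)"
| "ren_tr h (TL l q) = TL l (h q)"
| "ren_tr h (TE q1 q2) = TE (h q1) (h q2)"

definition rename :: "'q \<Rightarrow> 'q \<Rightarrow> ('f,'o,'l,'q) lta \<Rightarrow> ('f,'o,'l,'q) lta" where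
  "rename q1 q2 A = (let h = (\<lambda>x. if x = q1 then q2 else x) in
     \<lparr>states = h ` states A, finals = h ` finals A, trans = ren_tr h ` trans A\<rparr>)"

definition merge_step :: "('d,'o,'l::complete_lattice) absdom \<Rightarrow> ('f,'o,'d,'v) ceqn set
     \<Rightarrow> ('f,'o,'l,'q) lta \<Rightarrow> ('f,'o,'l,'q) lta \<Rightarrow> bool" where
  "merge_step D E A A' \<longleftrightarrow> (\<exists>u v cs \<sigma> q1 q2. (u,v,cs) \<in> E \<and>
     q1 \<in> states A \<and> q2 \<in> states A \<and> q1 \<noteq> q2 \<and>
     run D A (absT D (V \<circ> \<sigma>) u) q1 \<and> run D A (absT D (V \<circ> \<sigma>) v) q2 \<and>
     (\<exists>\<theta> :: 'v \<Rightarrow> ('f,'o,'d,'v) trm. (\<forall>x. ground (\<theta> x)) \<and>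
        (\<forall>x\<in>vars u \<union> vars v. \<theta> x \<in> lang D A (\<sigma> x)) \<and> conds_hold D \<theta> cs) \<and>
     (A' = rename q2 q1 A \<or> A' = rename q1 q2 A))"

definition merge_nf :: "('d,'o,'l::complete_lattice) absdom \<Rightarrow> ('f,'o,'d,'v) ceqn set
     \<Rightarrow> ('f,'o,'l,'q) lta \<Rightarrow> ('f,'o,'l,'q) lta \<Rightarrow> bool" where
  "merge_nf D E A A' \<longleftrightarrow> (merge_step D E)\<^sup>*\<^sup>* A A' \<and> \<not> (\<exists>A''. merge_step D E A' A'')"

definition lam_reach :: "('f,'o,'l,'q) lta \<Rightarrow> 'l \<Rightarrow> 'q \<Rightarrow> bool" where
  "lam_reach A l q \<longleftrightarrow> (\<exists>q0. TL l q0 \<in> trans A \<and> (q0, q) \<in> {(a,b). TE a b \<in> trans A}\<^sup>*)"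

text \<open>eval(A): closure under evaluation of interpreted transitions; added lambda
  transitions may be enlarged (widening)\<close>
definition eval_auto :: "('d,'o,'l::complete_lattice) absdom \<Rightarrow> ('f,'o,'l,'q) lta
     \<Rightarrow> ('f,'o,'l,'q) lta \<Rightarrow> bool" where
  "eval_auto D A A' \<longleftrightarrow> states A' = states A \<and> finals A' = finals A \<and> trans A \<subseteq> trans A' \<and>
     (\<forall>t\<in>trans A' - trans A. \<exists>l q g qs ls. t = TL l q \<and> TO g qs q \<in> trans A' \<and>
        length ls = length qs \<and> (\<forall>i<length qs. lam_reach A' (ls!i) (qs!i)) \<and>
        aeval D (Op g (map Cn ls) :: ('f,'o absop,'l,'q) trm) \<le> l) \<and>
     (\<forall>g qs q ls. TO g qs q \<in> trans A' \<and> length ls = length qs \<and>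
        (\<forall>i<length qs. lam_reach A' (ls!i) (qs!i)) \<longrightarrow>
        (\<exists>l. TL l q \<in> trans A' \<and> aeval D (Op g (map Cn ls) :: ('f,'o absop,'l,'q) trm) \<le> l))"

definition comp_step :: "('d,'o,'l::complete_lattice) absdom \<Rightarrow> ('f,'o,'d,'v) crule set
     \<Rightarrow> ('f,'o,'d,'v) ceqn set \<Rightarrow> ('f,'o,'d,'l,'q,'v) solver
     \<Rightarrow> ('f,'o,'l,'q) lta \<Rightarrow> ('f,'o,'l,'q) lta \<Rightarrow> bool" where
  "comp_step D R E Solve A A' \<longleftrightarrow> (\<exists>A0 A1 A2. eval_auto D A A0 \<and> cstep D R Solve A0 A1 \<and>
     merge_nf D E A1 A2 \<and> eval_auto D A2 A')"

definition completion_terminates :: "('d,'o,'l::complete_lattice) absdom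
     \<Rightarrow> ('f,'o,'d,'v) crule set \<Rightarrow> ('f,'o,'d,'v) ceqn set \<Rightarrow> ('f,'o,'d,'l,'q,'v) solver
     \<Rightarrow> ('f,'o,'l,'q) lta \<Rightarrow> ('f,'o,'l,'q) lta \<Rightarrow> bool" where
  "completion_terminates D R E Solve A Astar \<longleftrightarrow> (\<exists>seq k. seq 0 = A \<and>
     (\<forall>i\<le>k. comp_step D R E Solve (seq i) (seq (Suc i))) \<and>
     seq (Suc k) = seq k \<and> Astar = seq k)"

end

theory Submission
  imports Defs
begin

text \<open>
  Every stage of a completion step (evaluation closure, adding the critical pairs, merging
  states) maps ground runs to ground runs and final states to final states, so languages only
  grow along the completion sequence.  At the fixpoint the critical-pair step is simulated
  back into the automaton itself, and it covers every rewrite step: a run on an instance of a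
  left-linear left-hand side splits into a matching substitution into states, the sound
  solver over-approximates the values of the constrained variables, and either the abstract
  right-hand side is already recognized or its normalisation has been added with an
  \<open>\<epsilon>\<close>-transition to the redex state.  Re-plugging the runs of the matched subterms gives a
  run for the contractum, which lifts through the context.  Hence the language of the fixpoint
  contains the initial language and is closed under rewriting.
\<close>

section \<open>Evaluation and abstraction\<close>

lemma ceval_idem [simp]: "ceval D (ceval D t) = ceval D t"
  by (induction t) (auto simp: comp_def intro!: map_cong)

lemma ground_ceval: "ground t \<Longrightarrow> ground (ceval D t)"
proof -
  have "vars (ceval D t) \<subseteq> vars t"
    by (induction t) auto
  then show "ground t \<Longrightarrow> ground (ceval D t)"
    unfolding ground_def by blast
qed

lemma ceval_subst_ceval: "ceval D (subst (\<lambda>x. ceval D (\<sigma> x)) t) = ceval D (subst \<sigma> t)"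
  by (induction t) (simp_all cong: ball_cong map_cong)

lemma conds_hold_ceval_subst: "conds_hold D (ceval D \<circ> \<sigma>) cs \<longleftrightarrow> conds_hold D \<sigma> cs"
  unfolding conds_hold_def cond_holds_def by (simp add: comp_def ceval_subst_ceval)

lemma interp_ground: "interp c \<Longrightarrow> ground c"
  by (induction c) (auto simp: ground_def)

lemma is_C_ceval_if_interp: "interp c \<Longrightarrow> is_C (ceval D c)"
  by (induction c) auto

lemma interp_if_is_C_ceval: "ground c \<Longrightarrow> is_C (ceval D c) \<Longrightarrow> interp c"
  by (induction c) (auto simp: ground_def split: if_splits)

lemma is_C_ceval_subst_var:
  "nopassive_trm t \<Longrightarrow> x \<in> vars t \<Longrightarrow> is_C (ceval D (subst \<sigma> t)) \<Longrightarrow> is_C (ceval D (\<sigma> x))"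
  by (induction t) (auto split: if_splits)

lemma absT_cong: "(\<And>x. x \<in> vars u \<Longrightarrow> \<phi> x = \<psi> x) \<Longrightarrow> absT D \<phi> u = absT D \<psi> u"
  by (induction u) auto

lemma interp_absT_var: "interp (absT D \<phi> u) \<Longrightarrow> x \<in> vars u \<Longrightarrow> interp (\<phi> x)"
  by (induction u) auto

lemma interp_subst_if_interp_absT:
  "interp (absT D \<phi> u) \<Longrightarrow> \<forall>x\<in>vars u. interp (\<sigma> x) \<Longrightarrow> interp (subst \<sigma> u)"
  by (induction u) auto

lemma interp_if_interp_absT: "interp (absT D \<phi> c) \<Longrightarrow> ground c \<Longrightarrow> interp c"
  by (induction c) (auto simp: ground_def)

lemma alpha_ceval_le_aeval_absT:
  assumes "valid_dom D"
  shows "interp c \<Longrightarrow> alpha D (cval (ceval D c)) \<le> aeval D (absT D \<phi> c)"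
proof (induction c)
  case (Op g ts)
  have "alpha D (opc D g (map (\<lambda>t. cval (ceval D t)) ts)) \<le> opa D g (map (aeval D \<circ> absT D \<phi>) ts)"
    using assms Op unfolding valid_dom_def by auto
  then show ?case
    using Op.prems is_C_ceval_if_interp by auto
qed auto

lemma alpha_ceval_subst_le_aeval_absT:
  assumes "valid_dom D"
  shows "interp (absT D \<phi> u) \<Longrightarrow>
    \<forall>x\<in>vars u. interp (\<sigma> x) \<and> alpha D (cval (ceval D (\<sigma> x))) \<le> aeval D (\<phi> x) \<Longrightarrow>
    alpha D (cval (ceval D (subst \<sigma> u))) \<le> aeval D (absT D \<phi> u)"
proof (induction u)
  case (Op g ts)
  have "alpha D (opc D g (map (\<lambda>t. cval (ceval D (subst \<sigma> t))) ts))
      \<le> opa D g (map (aeval D \<circ> absT D \<phi>) ts)"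
    using assms Op unfolding valid_dom_def by auto
  moreover have "\<forall>t\<in>set ts. is_C (ceval D (subst \<sigma> t))"
    using Op.prems is_C_ceval_if_interp interp_subst_if_interp_absT by fastforce
  ultimately show ?case
    by (simp add: comp_def)
qed auto

section \<open>Approximation of concrete terms by configurations\<close>

text \<open>Unlike \<open>tle D (absT D \<phi> c) b\<close>, this relation is preserved when \<open>c\<close> is evaluated,
  which rewriting does after every step (\<open>approx_imp_tle_ceval\<close>).\<close>

inductive approx :: "('d,'o,'l::complete_lattice) absdom \<Rightarrow> ('f,'o,'d,'v) trm
     \<Rightarrow> ('f,'o absop,'l,'q) trm \<Rightarrow> bool" for D where
  approx_interp: "interp c \<Longrightarrow> interp b \<Longrightarrow> alpha D (cval (ceval D c)) \<le> aeval D b \<Longrightarrow> approx D c b"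
| approx_Fn: "list_all2 (approx D) cs bs \<Longrightarrow> approx D (Fn f cs) (Fn f bs)"
| approx_Op: "list_all2 (approx D) cs bs \<Longrightarrow> approx D (Op g cs) (Op (AOp g) bs)"

inductive_cases approx_FnE: "approx D (Fn f cs) b"
inductive_cases approx_OpE: "approx D (Op g cs) b"
inductive_cases tle_VE: "tle D (V q) b"
inductive_cases tle_CnE: "tle D (Cn l) b"
inductive_cases tle_FnE: "tle D (Fn f ss) b"
inductive_cases tle_OpE: "tle D (Op g ss) b"

lemma approx_ground: "approx D c b \<Longrightarrow> ground c \<and> ground b"
proof (induction rule: approx.induct)
  case approx_interp
  then show ?case
    by (simp add: interp_ground)
qed (auto simp: ground_def list_all2_conv_all_nth in_set_conv_nth)

lemma approx_not_interp: "approx D c b \<Longrightarrow> \<not> interp c \<Longrightarrow> \<not> interp b"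
  by (induction rule: approx.induct) (auto simp: list_all2_conv_all_nth in_set_conv_nth, metis nth_mem)

lemma tle_refl: "tle D t t"
  by (induction t) (auto intro: tle.intros simp: list_all2_conv_all_nth)

lemma approx_imp_tle_ceval:
  assumes "valid_dom D"
  shows "approx D c b \<Longrightarrow> tle D (absT D \<phi> (ceval D c)) b \<and>
     (is_C (ceval D c) \<longrightarrow> interp b \<and> alpha D (cval (ceval D c)) \<le> aeval D b)"
proof (induction rule: approx.induct)
  case (approx_interp c b)
  then obtain d where "ceval D c = Cn d"
    using is_C_ceval_if_interp by (metis is_C.elims(2))
  then show ?case
    using approx_interp by (auto intro: tle_interp)
next
  case (approx_Fn cs bs f)
  then show ?case
    by (auto intro!: tle_F simp: list_all2_conv_all_nth)
next
  case (approx_Op cs bs g)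
  show ?case
  proof (cases "\<forall>t\<in>set cs. is_C (ceval D t)")
    case True
    have args: "\<forall>i<length bs. interp (bs!i) \<and> alpha D (cval (ceval D (cs!i))) \<le> aeval D (bs!i)"
      using approx_Op True by (auto simp: list_all2_conv_all_nth)
    then have "interp (Op (AOp g) bs)"
      by (auto simp: in_set_conv_nth)
    moreover have "alpha D (opc D g (map (\<lambda>t. cval (ceval D t)) cs)) \<le> opa D g (map (aeval D) bs)"
      using assms args approx_Op unfolding valid_dom_def
      by (auto simp: list_all2_conv_all_nth)
    ultimately show ?thesis
      using True by (auto intro!: tle_interp)
  next
    case False
    then show ?thesis
      using approx_Op by (auto intro!: tle_O simp: list_all2_conv_all_nth)
  qed
qed

lemma tle_absT_imp_approx:
  assumes "valid_dom D"
  shows "ground c \<Longrightarrow> tle D (absT D \<phi> c) b \<Longrightarrow> approx D c b"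
proof (induction c arbitrary: b)
  case (Fn f cs)
  then show ?case
    by (auto elim!: tle_FnE intro!: approx_Fn simp: list_all2_conv_all_nth ground_def)
next
  case (Op g cs)
  from Op.prems(2) show ?case
  proof (cases rule: tle.cases)
    case tle_interp
    then have interp_c: "interp (Op g cs)"
      using interp_if_interp_absT Op.prems(1) by blast
    moreover have "alpha D (cval (ceval D (Op g cs))) \<le> aeval D b"
      using tle_interp alpha_ceval_le_aeval_absT[OF assms interp_c, of \<phi>] by (metis order_trans)
    ultimately show ?thesis
      using tle_interp by (auto intro: approx_interp)
  next
    case (tle_O ss ss')
    then show ?thesis
      using Op by (auto intro!: approx_Op simp: list_all2_conv_all_nth ground_def)
  qed auto
qed (auto elim!: tle_CnE intro!: approx_interp simp: ground_def)

section \<open>Runs\<close>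

definition eps_rel :: "('f,'o,'l,'q) lta \<Rightarrow> 'q rel" where
  "eps_rel A = {(a,b). TE a b \<in> trans A}"

text \<open>The closedness part of \<open>wf_lta\<close>; completion preserves it, and it makes the target state
  of a run on a redex an existing state, as the critical pairs require.\<close>

definition trans_in_states :: "('f,'o,'l,'q) lta \<Rightarrow> bool" where
  "trans_in_states A \<longleftrightarrow> (\<forall>t\<in>trans A. tr_states t \<subseteq> states A)"

lemma run_mono: "run D A t q \<Longrightarrow> trans A \<subseteq> trans A' \<Longrightarrow> run D A' t q"
  by (induction rule: run.induct) (auto intro: run.intros elim!: list_all2_mono)

lemma run_eps_rtrancl: "(q0, q) \<in> (eps_rel A)\<^sup>* \<Longrightarrow> run D A t q0 \<Longrightarrow> run D A t q"
  by (induction rule: rtrancl_induct) (auto simp: eps_rel_def intro: run_E)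

lemma eps_rel_rtrancl_mono: "trans A \<subseteq> trans A' \<Longrightarrow> (eps_rel A)\<^sup>* \<subseteq> (eps_rel A')\<^sup>*"
  unfolding eps_rel_def by (rule rtrancl_mono) blast

lemma run_V_imp_eps: "run D A s q \<Longrightarrow> s = V p \<Longrightarrow> (p, q) \<in> (eps_rel A)\<^sup>*"
  by (induction rule: run.induct) (auto simp: eps_rel_def intro: rtrancl_into_rtrancl)

lemma run_Fn_inv: "run D A s q \<Longrightarrow> s = Fn f ts \<Longrightarrow>
   \<exists>qs q0. TF f qs q0 \<in> trans A \<and> list_all2 (run D A) ts qs \<and> (q0, q) \<in> (eps_rel A)\<^sup>*"
proof (induction rule: run.induct)
  case (run_E t q1 q2)
  then show ?case
    by (metis (mono_tags) eps_rel_def case_prodI mem_Collect_eq rtrancl.rtrancl_into_rtrancl)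
next
  case (run_F f' qs q ts')
  then have "list_all2 (run D A) ts qs"
    by (auto elim: list_all2_mono)
  then show ?case
    using run_F by blast
qed auto

lemma run_Op_inv: "run D A s q \<Longrightarrow> s = Op g ts \<Longrightarrow> \<not> interp s \<Longrightarrow>
   \<exists>qs q0. TO g qs q0 \<in> trans A \<and> list_all2 (run D A) ts qs \<and> (q0, q) \<in> (eps_rel A)\<^sup>*"
proof (induction rule: run.induct)
  case (run_E t q1 q2)
  then show ?case
    by (metis (mono_tags) eps_rel_def case_prodI mem_Collect_eq rtrancl.rtrancl_into_rtrancl)
next
  case (run_O g' qs q ts')
  then have "list_all2 (run D A) ts qs"
    by (auto elim: list_all2_mono)
  then show ?case
    using run_O by blast
qed auto

lemma run_target_in_states:
  "run D A s q \<Longrightarrow> trans_in_states A \<Longrightarrow> \<forall>x. s \<noteq> V x \<Longrightarrow> \<not> interp s \<Longrightarrow> q \<in> states A"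
  by (induction rule: run.induct) (force simp: trans_in_states_def)+

lemma run_absT_plug:
  "run D A (absT D \<phi> r) q \<Longrightarrow>
   \<forall>x\<in>vars r. \<phi> x = \<psi> x \<or> (\<exists>p. \<phi> x = V p \<and> run D A (\<psi> x) p) \<Longrightarrow>
   run D A (absT D \<psi> r) q"
proof (induction r arbitrary: q)
  case (V x)
  then show ?case
    using run_V_imp_eps run_eps_rtrancl by fastforce
next
  case (Fn f rs)
  obtain qs q0 where r: "TF f qs q0 \<in> trans A" "list_all2 (run D A) (map (absT D \<phi>) rs) qs"
    "(q0, q) \<in> (eps_rel A)\<^sup>*"
    using run_Fn_inv[OF Fn.prems(1)] by auto
  have "run D A (absT D \<psi> (rs!i)) (qs!i)" if i: "i < length rs" for i
    using Fn.IH[OF nth_mem[OF i], of "qs!i"] Fn.prems(2) i r(2)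
    by (auto simp: list_all2_conv_all_nth, metis nth_mem)
  then have "list_all2 (run D A) (map (absT D \<psi>) rs) qs"
    using r(2) by (auto simp: list_all2_conv_all_nth)
  then show ?case
    using r by (auto intro: run_F run_eps_rtrancl)
next
  case (Op g rs)
  show ?case
  proof (cases "interp (absT D \<phi> (Op g rs))")
    case True
    then have "absT D \<phi> (Op g rs) = absT D \<psi> (Op g rs)"
      using Op.prems(2) interp_absT_var by (force intro: absT_cong)
    then show ?thesis
      using Op.prems(1) by metis
  next
    case False
    obtain qs q0 where r: "TO (AOp g) qs q0 \<in> trans A"
      "list_all2 (run D A) (map (absT D \<phi>) rs) qs" "(q0, q) \<in> (eps_rel A)\<^sup>*"
      using run_Op_inv[OF Op.prems(1)] False by auto
    have "run D A (absT D \<psi> (rs!i)) (qs!i)" if i: "i < length rs" for i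
      using Op.IH[OF nth_mem[OF i], of "qs!i"] Op.prems(2) i r(2)
      by (auto simp: list_all2_conv_all_nth, metis nth_mem)
    then have "list_all2 (run D A) (map (absT D \<psi>) rs) qs"
      using r(2) by (auto simp: list_all2_conv_all_nth)
    then show ?thesis
      using r by (auto intro: run_O run_eps_rtrancl)
  qed
qed simp

lemma norm_run: "norm D A t q N \<Longrightarrow> trans A \<subseteq> trans A' \<Longrightarrow> N \<subseteq> trans A' \<Longrightarrow> run D A' t q"
proof (induction rule: norm.induct)
  case (norm_F q qs ts Ns f)
  have "run D A' (ts!i) (qs!i)" if i: "i < length ts" for i
  proof -
    have "Ns!i \<in> set Ns"
      using norm_F.hyps(3) i by simp
    then have "Ns!i \<subseteq> trans A'"
      using norm_F.prems(2) by blast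
    then show ?thesis
      using norm_F.IH[rule_format, OF i] norm_F.prems(1) by blast
  qed
  then have "list_all2 (run D A') ts qs"
    using norm_F.hyps(2) by (simp add: list_all2_conv_all_nth)
  then show ?case
    using norm_F.prems(2) by (auto intro: run_F)
next
  case (norm_O q qs ts Ns g)
  have "run D A' (ts!i) (qs!i)" if i: "i < length ts" for i
  proof -
    have "Ns!i \<in> set Ns"
      using norm_O.hyps(3) i by simp
    then have "Ns!i \<subseteq> trans A'"
      using norm_O.prems(2) by blast
    then show ?thesis
      using norm_O.IH[rule_format, OF i] norm_O.prems(1) by blast
  qed
  then have "list_all2 (run D A') ts qs"
    using norm_O.hyps(2) by (simp add: list_all2_conv_all_nth)
  then show ?case
    using norm_O.prems(2) by (auto intro: run_O)
qed (auto intro: run_V run_L run_mono)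

lemma ceval_in_lang:
  assumes "valid_dom D" "approx D c b" "run D A b q"
  shows "ceval D c \<in> lang D A q"
  using assms approx_imp_tle_ceval[OF assms(1,2)] approx_ground[OF assms(2)] ground_ceval
  unfolding lang_def by blast

section \<open>Simulating a rewrite step\<close>

lemma list_all2_run_update:
  assumes "list_all2 (run D A) bs qs" "trans A \<subseteq> trans A'" "run D A' b (qs!i)"
  shows "list_all2 (run D A') (bs[i := b]) qs"
proof -
  have "list_all2 (run D A') bs qs"
    using assms(1) by (rule list_all2_mono) (rule run_mono[OF _ assms(2)])
  then show ?thesis
    using assms(3) by (metis list_all2_update_cong list_update_id)
qed

lemma ctx_rep_not_interp: "ctx_rep u v s s' \<Longrightarrow> \<not> interp u \<Longrightarrow> \<not> interp s"
  by (induction rule: ctx_rep.induct) auto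

lemma approx_run_ctx_rep:
  assumes "ctx_rep u v s s'" "\<not> interp u" "trans A \<subseteq> trans A'"
    and root: "\<And>bu q. approx D u bu \<Longrightarrow> run D A bu q \<Longrightarrow> \<exists>bv. approx D v bv \<and> run D A' bv q"
  shows "approx D s b \<Longrightarrow> run D A b q \<Longrightarrow> \<exists>b'. approx D s' b' \<and> run D A' b' q"
  using assms(1)
proof (induction arbitrary: b q rule: ctx_rep.induct)
  case ctx_root
  then show ?case
    using root by blast
next
  case (ctx_F i ts t' f)
  from ctx_F.prems(1) obtain bs where b: "b = Fn f bs" "list_all2 (approx D) ts bs"
    by (auto elim: approx_FnE)
  obtain qs q0 where r: "TF f qs q0 \<in> trans A" "list_all2 (run D A) bs qs" "(q0, q) \<in> (eps_rel A)\<^sup>*"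
    using run_Fn_inv[OF ctx_F.prems(2) b(1)] by blast
  obtain b'' where b'': "approx D t' b''" "run D A' b'' (qs!i)"
    using ctx_F.IH[of "bs!i" "qs!i"] b(2) r(2) ctx_F.hyps(1) by (auto simp: list_all2_conv_all_nth)
  have "list_all2 (run D A') (bs[i := b'']) qs"
    using list_all2_run_update[OF r(2) assms(3) b''(2)] .
  then have "run D A' (Fn f (bs[i := b''])) q"
    using r(1,3) assms(3) eps_rel_rtrancl_mono by (blast intro: run_F run_eps_rtrancl)
  moreover have "list_all2 (approx D) (ts[i := t']) (bs[i := b''])"
    using b(2) b''(1) by (simp add: list_all2_update_cong)
  ultimately show ?case
    by (auto intro: approx_Fn)
next
  case (ctx_O i ts t' g)
  have not_interp: "\<not> interp (Op g ts)"
    using ctx_rep_not_interp[OF ctx_rep.ctx_O[OF ctx_O.hyps] assms(2)] .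
  with ctx_O.prems(1) obtain bs where b: "b = Op (AOp g) bs" "list_all2 (approx D) ts bs"
    by (auto elim: approx_OpE)
  obtain qs q0 where r: "TO (AOp g) qs q0 \<in> trans A" "list_all2 (run D A) bs qs" "(q0, q) \<in> (eps_rel A)\<^sup>*"
    using run_Op_inv[OF ctx_O.prems(2) b(1)] approx_not_interp[OF ctx_O.prems(1) not_interp] b(1)
    by blast
  obtain b'' where b'': "approx D t' b''" "run D A' b'' (qs!i)"
    using ctx_O.IH[of "bs!i" "qs!i"] b(2) r(2) ctx_O.hyps(1) by (auto simp: list_all2_conv_all_nth)
  have "list_all2 (run D A') (bs[i := b'']) qs"
    using list_all2_run_update[OF r(2) assms(3) b''(2)] .
  then have "run D A' (Op (AOp g) (bs[i := b''])) q"
    using r(1,3) assms(3) eps_rel_rtrancl_mono by (blast intro: run_O run_eps_rtrancl)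
  moreover have "list_all2 (approx D) (ts[i := t']) (bs[i := b''])"
    using b(2) b''(1) by (simp add: list_all2_update_cong)
  ultimately show ?case
    by (auto intro: approx_Op)
qed

lemma merge_on_disjoint_vars:
  assumes "\<forall>i j. i < j \<and> j < length ls \<longrightarrow> vars (ls!i) \<inter> vars (ls!j) = {}"
  obtains G where "\<And>i x. i < length ls \<Longrightarrow> x \<in> vars (ls!i) \<Longrightarrow> G x = F i x"
proof
  fix i x assume i: "i < length ls" "x \<in> vars (ls!i)"
  have "j = i" if "j < length ls" "x \<in> vars (ls!j)" for j
    using assms that i by (metis disjoint_iff linorder_neqE_nat)
  then have "(SOME j. j < length ls \<and> x \<in> vars (ls!j)) = i"
    using i by (metis (mono_tags, lifting) someI)
  then show "F (SOME j. j < length ls \<and> x \<in> vars (ls!j)) x = F i x"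
    by simp
qed

lemma approx_run_imp_matching:
  "passive_trm l \<Longrightarrow> linear l \<Longrightarrow> approx D (subst \<sigma> l) b \<Longrightarrow> run D A b q \<Longrightarrow>
   \<exists>\<tau> bx. run D A (absT D (V \<circ> \<tau>) l) q \<and> (\<forall>x\<in>vars l. approx D (\<sigma> x) (bx x) \<and> run D A (bx x) (\<tau> x))"
proof (induction l arbitrary: b q)
  case (V x)
  show ?case
    using V.prems by (auto intro!: exI[of _ "\<lambda>_. q"] exI[of _ "\<lambda>_. b"] run_V)
next
  case (Fn f ls)
  from Fn.prems(3) obtain bs where b: "b = Fn f bs" "list_all2 (approx D) (map (subst \<sigma>) ls) bs"
    by (auto elim: approx_FnE)
  obtain qs q0 where r: "TF f qs q0 \<in> trans A" "list_all2 (run D A) bs qs" "(q0, q) \<in> (eps_rel A)\<^sup>*"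
    using run_Fn_inv[OF Fn.prems(4) b(1)] by blast
  let ?P = "\<lambda>i \<tau> bx. run D A (absT D (V \<circ> \<tau>) (ls!i)) (qs!i) \<and>
    (\<forall>x\<in>vars (ls!i). approx D (\<sigma> x) (bx x) \<and> run D A (bx x) (\<tau> x))"
  have "\<forall>i<length ls. \<exists>\<tau> bx. ?P i \<tau> bx"
    using Fn.IH Fn.prems(1,2) b(2) r(2) by (simp add: comp_def list_all2_conv_all_nth) (metis nth_mem)
  then obtain T B where TB: "\<And>i. i < length ls \<Longrightarrow> ?P i (T i) (B i)"
    by metis
  \<comment> \<open>the arguments of a linear term share no variables, so their matchers can be merged\<close>
  obtain G where G: "\<And>i x. i < length ls \<Longrightarrow> x \<in> vars (ls!i) \<Longrightarrow> G x = (T i x, B i x)"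
    using merge_on_disjoint_vars[of ls "\<lambda>i x. (T i x, B i x)"] Fn.prems(2) by auto
  have args: "?P i (fst \<circ> G) (snd \<circ> G)" if i: "i < length ls" for i
  proof -
    have "absT D (V \<circ> (fst \<circ> G)) (ls!i) = absT D (V \<circ> T i) (ls!i)"
      by (rule absT_cong) (simp add: G[OF i])
    then show ?thesis
      using TB[OF i] G[OF i] by simp
  qed
  have "length ls = length qs"
    using b(2) r(2) by (metis length_map list_all2_lengthD)
  then have "list_all2 (run D A) (map (absT D (V \<circ> (fst \<circ> G))) ls) qs"
    using args by (simp add: list_all2_conv_all_nth)
  then have "run D A (absT D (V \<circ> (fst \<circ> G)) (Fn f ls)) q"
    using r(1,3) by (auto intro: run_F run_eps_rtrancl)
  moreover have "\<forall>x\<in>vars (Fn f ls). approx D (\<sigma> x) ((snd \<circ> G) x) \<and> run D A ((snd \<circ> G) x) ((fst \<circ> G) x)"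
    using args by (metis in_set_conv_nth vars.simps(2) UN_E)
  ultimately show ?case
    by blast
qed auto

lemma interp_if_cvar:
  assumes "\<forall>c\<in>set cs. \<forall>t\<in>set (snd c). nopassive_trm t" "\<forall>x. ground (\<sigma> x)"
    and "conds_hold D \<sigma> cs" "x \<in> cvars cs"
  shows "interp (\<sigma> x)"
proof -
  obtain c t where ct: "c \<in> set cs" "t \<in> set (snd c)" "x \<in> vars t"
    using assms(4) unfolding cvars_def by blast
  then have "is_C (ceval D (subst \<sigma> t))"
    using assms(3) unfolding conds_hold_def cond_holds_def by blast
  then show ?thesis
    using is_C_ceval_subst_var assms(1,2) ct interp_if_is_C_ceval by metis
qed

lemma sound_solver_instance:
  fixes \<sigma> :: "'v \<Rightarrow> ('f,'o,'d,'v) trm" and cs :: "('f,'o,'d,'v) cond list"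
  assumes vd: "valid_dom D" and ss: "sound_solver D Solve"
    and gr: "\<forall>x. ground (\<sigma> x)" and ch: "conds_hold D \<sigma> cs"
    and args: "\<forall>x\<in>cvars cs. approx D (\<sigma> x) (bx x) \<and> run D A (bx x) (\<tau> x)"
  obtains \<sigma>' where "\<sigma>' \<in> Solve \<tau> A cs"
    "\<forall>x. if x \<in> cvars cs then \<exists>l. \<sigma>' x = Cn l \<and> alpha D (cval (ceval D (\<sigma> x))) \<le> l
         else \<sigma>' x = V (\<tau> x)"
proof -
  note solver = ss[unfolded sound_solver_def, rule_format, of \<tau> A cs]
  let ?\<theta> = "ceval D \<circ> \<sigma>"
  have "\<forall>x. ground (?\<theta> x)"
    using gr ground_ceval by auto
  moreover have "\<forall>x\<in>cvars cs. ?\<theta> x \<in> lang D A (\<tau> x)"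
  proof
    fix x assume "x \<in> cvars cs"
    then show "?\<theta> x \<in> lang D A (\<tau> x)"
      using args ceval_in_lang[OF vd, of "\<sigma> x" "bx x" A "\<tau> x"] by simp
  qed
  moreover have "conds_hold D ?\<theta> cs"
    using ch conds_hold_ceval_subst by blast
  ultimately obtain \<sigma>' where \<sigma>': "\<sigma>' \<in> Solve \<tau> A cs"
    "\<forall>x\<in>cvars cs. \<exists>l. \<sigma>' x = Cn l \<and> alpha D (cval (ceval D (\<sigma> x))) \<le> l"
    using conjunct2[OF solver, rule_format, of ?\<theta>] by auto
  moreover have "\<forall>x. x \<notin> cvars cs \<longrightarrow> \<sigma>' x = V (\<tau> x)"
    using conjunct1[OF solver] \<sigma>'(1) by (metis (full_types))
  ultimately show thesis
    using that by (metis (full_types))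
qed

lemma tle_absT_state_leaf:
  "tle D (absT D \<phi> r) (absT D \<psi> r) \<Longrightarrow> x \<in> vars r \<Longrightarrow> \<phi> x = V p \<Longrightarrow> \<psi> x = V p"
proof (induction r)
  case (V y)
  then show ?case
    by (auto elim: tle_VE)
next
  case (Fn f rs)
  then obtain r where "r \<in> set rs" "x \<in> vars r"
    by auto
  moreover have "list_all2 (tle D) (map (absT D \<phi>) rs) (map (absT D \<psi>) rs)"
    using Fn.prems(1) by (auto elim: tle_FnE)
  ultimately show ?case
    using Fn.IH Fn.prems(3) by (auto simp: list_all2_conv_all_nth in_set_conv_nth)
next
  case (Op g rs)
  then obtain r where r: "r \<in> set rs" "x \<in> vars r"
    by auto
  have "\<not> interp (absT D \<phi> (Op g rs))"
    using interp_absT_var Op.prems(2,3) by fastforce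
  then have "list_all2 (tle D) (map (absT D \<phi>) rs) (map (absT D \<psi>) rs)"
    using Op.prems(1) by (auto elim: tle_OpE)
  then show ?case
    using r Op.IH Op.prems(3) by (auto simp: list_all2_conv_all_nth in_set_conv_nth)
qed simp

text \<open>Here \<open>\<sigma>'\<close> is a solver output (lattice values on the constrained variables \<open>C\<close>, states
  elsewhere) and \<open>\<sigma>''\<close> the configuration recognized above it; the contractum is approximated by
  \<open>\<sigma>''\<close> on \<open>C\<close> and by the approximations \<open>bx\<close> of the matched subterms elsewhere.\<close>

lemma approx_subst_absT:
  assumes vd: "valid_dom D"
  shows "tle D (absT D \<sigma>' r) (absT D \<sigma>'' r) \<Longrightarrow>
    \<forall>x\<in>vars r. if x \<in> C
      then interp (\<sigma> x) \<and> (\<exists>l. \<sigma>' x = Cn l \<and> alpha D (cval (ceval D (\<sigma> x))) \<le> l)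
      else \<sigma>' x = V (\<tau> x) \<and> approx D (\<sigma> x) (bx x) \<Longrightarrow>
    approx D (subst \<sigma> r) (absT D (\<lambda>x. if x \<in> C then \<sigma>'' x else bx x) r)"
proof (induction r)
  case (V x)
  show ?case
  proof (cases "x \<in> C")
    case True
    then obtain l where "interp (\<sigma> x)" "\<sigma>' x = Cn l" "alpha D (cval (ceval D (\<sigma> x))) \<le> l"
      using V.prems(2) by auto
    moreover from this have "interp (\<sigma>'' x) \<and> l \<le> aeval D (\<sigma>'' x)"
      using V.prems(1) by (auto elim: tle_CnE)
    ultimately show ?thesis
      using True by (auto intro!: approx_interp)
  next
    case False
    then show ?thesis
      using V.prems(2) by simp
  qed
next
  case (Cn d)
  show ?case
    by (auto intro!: approx_interp)
next
  case (Fn f rs)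
  have "list_all2 (tle D) (map (absT D \<sigma>') rs) (map (absT D \<sigma>'') rs)"
    using Fn.prems(1) by (auto elim: tle_FnE)
  then show ?case
    using Fn.IH Fn.prems(2)
    by (auto intro!: approx_Fn simp: list_all2_map1 list_all2_map2 list_all2_same)
next
  case (Op g rs)
  from Op.prems(1) show ?case
  proof (cases rule: tle.cases)
    case tle_interp
    have in_C: "x \<in> C" if "x \<in> vars (Op g rs)" for x
      using Op.prems(2) that interp_absT_var[OF tle_interp(1) that] by (metis interp.simps(1))
    have "absT D (\<lambda>x. if x \<in> C then \<sigma>'' x else bx x) (Op g rs) = absT D \<sigma>'' (Op g rs)"
      by (rule absT_cong) (simp add: in_C)
    moreover have hyp: "\<forall>x\<in>vars (Op g rs). interp (\<sigma> x) \<and> alpha D (cval (ceval D (\<sigma> x))) \<le> aeval D (\<sigma>' x)"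
      using Op.prems(2) in_C by fastforce
    then have "interp (subst \<sigma> (Op g rs))"
      using interp_subst_if_interp_absT[OF tle_interp(1)] by blast
    moreover have "alpha D (cval (ceval D (subst \<sigma> (Op g rs)))) \<le> aeval D (absT D \<sigma>'' (Op g rs))"
      using alpha_ceval_subst_le_aeval_absT[OF vd tle_interp(1) hyp] tle_interp(3) by (rule order_trans)
    ultimately show ?thesis
      using tle_interp(2) by (metis approx_interp)
  next
    case (tle_O ss')
    then have "list_all2 (tle D) (map (absT D \<sigma>') rs) (map (absT D \<sigma>'') rs)"
      by simp
    then show ?thesis
      using Op.IH Op.prems(2)
      by (auto intro!: approx_Op simp: list_all2_map1 list_all2_map2 list_all2_same)
  qed auto
qed

lemma run_absT_replug:
  assumes "tle D (absT D \<sigma>' r) (absT D \<sigma>'' r)" "run D A (absT D \<sigma>'' r) q"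
    and "\<forall>x\<in>vars r. x \<notin> C \<longrightarrow> \<sigma>' x = V (\<tau> x) \<and> run D A (bx x) (\<tau> x)"
  shows "run D A (absT D (\<lambda>x. if x \<in> C then \<sigma>'' x else bx x) r) q"
proof (rule run_absT_plug[OF assms(2)], intro ballI)
  fix x assume x: "x \<in> vars r"
  show "\<sigma>'' x = (if x \<in> C then \<sigma>'' x else bx x) \<or>
    (\<exists>p. \<sigma>'' x = V p \<and> run D A (if x \<in> C then \<sigma>'' x else bx x) p)"
  proof (cases "x \<in> C")
    case False
    then have "\<sigma>'' x = V (\<tau> x)"
      using tle_absT_state_leaf[OF assms(1) x] assms(3) x by blast
    then show ?thesis
      using False assms(3) x by simp
  qed simp
qed

section \<open>The critical-pair step\<close>

lemma cstepE:
  assumes "cstep D R Solve A A'"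
  obtains qn Ns where
    "\<forall>j\<in>cpairs D R Solve A. qn j \<notin> states A \<and> norm D A (snd (snd j)) (qn j) (Ns j)"
    "states A' = states A \<union> (\<Union>j\<in>cpairs D R Solve A. insert (qn j) (\<Union>(tr_states ` Ns j)))"
    "finals A' = finals A"
    "trans A' = trans A \<union> (\<Union>j\<in>cpairs D R Solve A. insert (TE (qn j) (fst (snd j))) (Ns j))"
  using assms unfolding cstep_def by (elim exE conjE) (rule that; simp)

lemma cstep_trans_mono: "cstep D R Solve A A' \<Longrightarrow> trans A \<subseteq> trans A'"
  by (elim cstepE) auto

lemma cstep_finals: "cstep D R Solve A A' \<Longrightarrow> finals A' = finals A"
  by (elim cstepE)

lemma cstep_trans_in_states: "cstep D R Solve A A' \<Longrightarrow> trans_in_states A \<Longrightarrow> trans_in_states A'"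
  by (elim cstepE) (fastforce simp: trans_in_states_def cpairs_def)

lemma cstep_runs_critical_pair:
  assumes cst: "cstep D R Solve A A'" and j: "j \<in> cpairs D R Solve A"
  shows "run D A' (snd (snd j)) (fst (snd j))"
proof -
  obtain qn Ns where norm: "norm D A (snd (snd j)) (qn j) (Ns j)"
    and new: "insert (TE (qn j) (fst (snd j))) (Ns j) \<subseteq> trans A'"
    using cst j by (elim cstepE) blast
  have "run D A' (snd (snd j)) (qn j)"
    using new by (intro norm_run[OF norm cstep_trans_mono[OF cst]]) simp
  moreover have "TE (qn j) (fst (snd j)) \<in> trans A'"
    using new by simp
  ultimately show ?thesis
    by (rule run_E)
qed

lemma cstep_covers_critical_pair:
  assumes cst: "cstep D R Solve A A'" and rl: "(l, r, cs) \<in> R" and q: "q \<in> states A"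
    and \<tau>: "\<tau> \<in> matching D A l q" and \<sigma>': "\<sigma>' \<in> Solve \<tau> A cs"
  obtains \<sigma>'' where "tle D (absT D \<sigma>' r) (absT D \<sigma>'' r)" "run D A' (absT D \<sigma>'' r) q"
proof (cases "\<exists>\<sigma>''. tle D (absT D \<sigma>' r) (absT D \<sigma>'' r) \<and> run D A (absT D \<sigma>'' r) q")
  case True
  then obtain \<sigma>'' where "tle D (absT D \<sigma>' r) (absT D \<sigma>'' r)" "run D A (absT D \<sigma>'' r) q"
    by blast
  then show ?thesis
    using that run_mono[OF _ cstep_trans_mono[OF cst]] by blast
next
  case False
  then have "\<sigma>' \<in> omega D Solve A (l, r, cs) q"
    unfolding omega_def using \<tau> \<sigma>' by blast
  then have "((l, r, cs), q, absT D \<sigma>' r) \<in> cpairs D R Solve A"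
    unfolding cpairs_def using rl q by auto
  then show ?thesis
    using that tle_refl cstep_runs_critical_pair[OF cst] by fastforce
qed

lemma cstep_simulates_rule_at_root:
  fixes \<sigma> :: "'v \<Rightarrow> ('f,'o,'d,'v) trm"
  assumes vd: "valid_dom D" and ss: "sound_solver D Solve" and ct: "ctrs R" and ll: "left_linear R"
    and A: "trans_in_states A" and cst: "cstep D R Solve A A'"
    and rl: "(l, r, cs) \<in> R" and gr: "\<forall>x. ground (\<sigma> x)" and ch: "conds_hold D \<sigma> cs"
    and apl: "approx D (subst \<sigma> l) b" and run: "run D A b q"
  shows "\<exists>b'. approx D (subst \<sigma> r) b' \<and> run D A' b' q"
proof -
  have l: "\<forall>x. l \<noteq> V x" "passive_trm l" "linear l" and vr: "vars r \<subseteq> vars l"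
    and cs: "\<forall>c\<in>set cs. \<forall>t\<in>set (snd c). nopassive_trm t \<and> vars t \<subseteq> vars l"
    using ct ll rl unfolding ctrs_def left_linear_def by fastforce+
  then have "cvars cs \<subseteq> vars l"
    unfolding cvars_def by blast
  have "q \<in> states A"
    using run_target_in_states[OF run A] apl l(1,2) by (cases l) (auto elim: approx_FnE)
  obtain \<tau> bx where \<tau>: "\<tau> \<in> matching D A l q"
    and bx: "\<forall>x\<in>vars l. approx D (\<sigma> x) (bx x) \<and> run D A (bx x) (\<tau> x)"
    using approx_run_imp_matching[OF l(2,3) apl run] unfolding matching_def by blast
  obtain \<sigma>' where \<sigma>': "\<sigma>' \<in> Solve \<tau> A cs"
    "\<forall>x. if x \<in> cvars cs then \<exists>l. \<sigma>' x = Cn l \<and> alpha D (cval (ceval D (\<sigma> x))) \<le> l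
         else \<sigma>' x = V (\<tau> x)"
    using sound_solver_instance[OF vd ss gr ch] bx \<open>cvars cs \<subseteq> vars l\<close> by blast
  obtain \<sigma>'' where \<sigma>'': "tle D (absT D \<sigma>' r) (absT D \<sigma>'' r)" "run D A' (absT D \<sigma>'' r) q"
    using cstep_covers_critical_pair[OF cst rl \<open>q \<in> states A\<close> \<tau> \<sigma>'(1)] by blast
  have "\<forall>x\<in>vars r. if x \<in> cvars cs
      then interp (\<sigma> x) \<and> (\<exists>l. \<sigma>' x = Cn l \<and> alpha D (cval (ceval D (\<sigma> x))) \<le> l)
      else \<sigma>' x = V (\<tau> x) \<and> approx D (\<sigma> x) (bx x)"
    using \<sigma>'(2) bx vr interp_if_cvar[OF _ gr ch] cs by auto
  then have "approx D (subst \<sigma> r) (absT D (\<lambda>x. if x \<in> cvars cs then \<sigma>'' x else bx x) r)"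
    using approx_subst_absT[OF vd \<sigma>''(1)] by blast
  moreover have "run D A' (absT D (\<lambda>x. if x \<in> cvars cs then \<sigma>'' x else bx x) r) q"
  proof (rule run_absT_replug[OF \<sigma>''])
    show "\<forall>x\<in>vars r. x \<notin> cvars cs \<longrightarrow> \<sigma>' x = V (\<tau> x) \<and> run D A' (bx x) (\<tau> x)"
      using \<sigma>'(2) bx vr run_mono[OF _ cstep_trans_mono[OF cst]] by (metis subsetD)
  qed
  ultimately show ?thesis
    by blast
qed

lemma cstep_simulates_rstep:
  fixes s t :: "('f,'o,'d,'v) trm" and R :: "('f,'o,'d,'v) crule set"
  assumes vd: "valid_dom D" and ss: "sound_solver D Solve" and ct: "ctrs R" and ll: "left_linear R"
    and A: "trans_in_states A" and cst: "cstep D R Solve A A'"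
    and st: "rstep D R s t" and s: "approx D s b" "run D A b q"
  shows "t \<in> lang D A' q"
proof -
  obtain l r cs \<sigma> s' where rl: "(l, r, cs) \<in> R" "\<forall>x. ground (\<sigma> x)" "conds_hold D \<sigma> cs"
    and ctx: "ctx_rep (subst \<sigma> l) (subst \<sigma> r) s s'" and t: "t = ceval D s'"
    using st unfolding rstep_def by blast
  have "\<not> interp (subst \<sigma> l)"
    using ct rl(1) unfolding ctrs_def by (cases l) auto
  then obtain b' where "approx D s' b'" "run D A' b' q"
    using approx_run_ctx_rep[OF ctx _ cstep_trans_mono[OF cst]] s
      cstep_simulates_rule_at_root[OF vd ss ct ll A cst rl] by blast
  then show ?thesis
    unfolding t by (rule ceval_in_lang[OF vd])
qed

section \<open>Completion steps as simulations\<close>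

definition run_simulation :: "('d,'o,'l::complete_lattice) absdom \<Rightarrow> ('f,'o,'l,'q) lta
     \<Rightarrow> ('f,'o,'l,'q) lta \<Rightarrow> ('q \<Rightarrow> 'q) \<Rightarrow> bool" where
  "run_simulation D A A' h \<longleftrightarrow>
     (\<forall>t q. ground t \<longrightarrow> run D A t q \<longrightarrow> run D A' t (h q)) \<and> h ` finals A \<subseteq> finals A'"

lemma run_simulation_id:
  assumes "trans A \<subseteq> trans A'" "finals A \<subseteq> finals A'"
  shows "run_simulation D A A' id"
  unfolding run_simulation_def using assms(2) by (simp add: run_mono[OF _ assms(1)])

lemma run_simulation_comp:
  "run_simulation D A B h \<Longrightarrow> run_simulation D B C g \<Longrightarrow> run_simulation D A C (g \<circ> h)"
  unfolding run_simulation_def by (auto simp: image_comp) blast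

lemma lang_run_simulation:
  assumes "valid_dom D" "run_simulation D A A' h" "t \<in> lang D A q"
  shows "t \<in> lang D A' (h q)"
proof -
  obtain b where b: "ground t" "tle D (absT D (\<lambda>_. undefined) t) b" "run D A b q"
    using assms(3) unfolding lang_def by blast
  then have "ground b"
    using approx_ground tle_absT_imp_approx[OF assms(1)] by blast
  then have "run D A' b (h q)"
    using assms(2) b(3) unfolding run_simulation_def by blast
  then show ?thesis
    using b(1,2) unfolding lang_def by blast
qed

lemma lang_A_run_simulation:
  assumes "valid_dom D" "run_simulation D A A' h"
  shows "lang_A D A \<subseteq> lang_A D A'"
proof
  fix t assume "t \<in> lang_A D A"
  then obtain q where "q \<in> finals A" "t \<in> lang D A q"
    unfolding lang_A_def by blast
  then show "t \<in> lang_A D A'"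
    using lang_run_simulation[OF assms] assms(2) unfolding lang_A_def run_simulation_def by blast
qed

lemma ren_tr_in_rename: "t \<in> trans A \<Longrightarrow>
    ren_tr (\<lambda>x. if x = q1 then q2 else x) t \<in> trans (rename q1 q2 A)"
  unfolding rename_def Let_def by simp

lemma run_rename:
  assumes "run D A t q" "ground t"
  shows "run D (rename q1 q2 A) t ((\<lambda>x. if x = q1 then q2 else x) q)"
  using assms
proof (induction rule: run.induct)
  case (run_E t qa qb)
  have "TE ((\<lambda>x. if x = q1 then q2 else x) qa) ((\<lambda>x. if x = q1 then q2 else x) qb)
      \<in> trans (rename q1 q2 A)"
    using ren_tr_in_rename[OF run_E.hyps(2), of q1 q2] by simp
  with run_E.IH[OF run_E.prems] show ?case
    by (rule run.run_E)
next
  case (run_F f qs q ts)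
  moreover have "list_all2 (run D (rename q1 q2 A)) ts (map (\<lambda>x. if x = q1 then q2 else x) qs)"
    using run_F by (auto simp: list_all2_conv_all_nth ground_def)
  ultimately show ?case
    using ren_tr_in_rename[OF run_F.hyps(1), of q1 q2] by (auto intro: run.run_F)
next
  case (run_O g qs q ts)
  moreover have "list_all2 (run D (rename q1 q2 A)) ts (map (\<lambda>x. if x = q1 then q2 else x) qs)"
    using run_O by (auto simp: list_all2_conv_all_nth ground_def)
  ultimately show ?case
    using ren_tr_in_rename[OF run_O.hyps(1), of q1 q2] by (auto intro: run.run_O)
next
  case (run_L l q u)
  then show ?case
    using ren_tr_in_rename[OF run_L.hyps(1), of q1 q2] by (auto intro: run.run_L)
qed (simp add: ground_def)

lemma run_simulation_rename:
  "run_simulation D A (rename q1 q2 A) (\<lambda>x. if x = q1 then q2 else x)"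
  unfolding run_simulation_def
proof
  show "\<forall>t q. ground t \<longrightarrow> run D A t q \<longrightarrow> run D (rename q1 q2 A) t (if q = q1 then q2 else q)"
    by (intro allI impI) (rule run_rename)
  show "(\<lambda>x. if x = q1 then q2 else x) ` finals A \<subseteq> finals (rename q1 q2 A)"
    by (simp add: rename_def Let_def)
qed

lemma tr_states_ren_tr: "tr_states (ren_tr h t) = h ` tr_states t"
  by (cases t) auto

lemma trans_in_states_rename:
  assumes "trans_in_states A"
  shows "trans_in_states (rename q1 q2 A)"
proof -
  let ?h = "\<lambda>x. if x = q1 then q2 else x"
  have "tr_states (ren_tr ?h t) \<subseteq> ?h ` states A" if "t \<in> trans A" for t
    using assms that unfolding trans_in_states_def tr_states_ren_tr by blast
  then show ?thesis
    unfolding trans_in_states_def rename_def Let_def by (simp only: lta.select_convs) blast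
qed

lemma merge_step_rename:
  assumes "merge_step D E A A'"
  obtains q1 q2 where "A' = rename q1 q2 A"
  using assms unfolding merge_step_def by blast

lemma merge_steps_simulation:
  "(merge_step D E)\<^sup>*\<^sup>* A A' \<Longrightarrow> \<exists>h. run_simulation D A A' h"
proof (induction rule: rtranclp_induct)
  case base
  have "run_simulation D A A id"
    by (rule run_simulation_id) simp_all
  then show ?case
    by blast
next
  case (step A' A'')
  obtain h where h: "run_simulation D A A' h"
    using step.IH by blast
  obtain q1 q2 where "A'' = rename q1 q2 A'"
    using merge_step_rename[OF step.hyps(2)] .
  then show ?case
    using run_simulation_comp[OF h run_simulation_rename] by blast
qed

lemma merge_steps_trans_in_states:
  "(merge_step D E)\<^sup>*\<^sup>* A A' \<Longrightarrow> trans_in_states A \<Longrightarrow> trans_in_states A'"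
proof (induction rule: rtranclp_induct)
  case (step A' A'')
  obtain q1 q2 where "A'' = rename q1 q2 A'"
    using merge_step_rename[OF step.hyps(2)] .
  then show ?case
    using trans_in_states_rename[OF step.IH[OF step.prems]] by simp
qed

lemma eval_auto_simulation: "eval_auto D A A' \<Longrightarrow> run_simulation D A A' id"
  unfolding eval_auto_def by (simp add: run_simulation_id)

lemma eval_auto_trans_in_states:
  assumes "eval_auto D A A'" "trans_in_states A"
  shows "trans_in_states A'"
  unfolding trans_in_states_def
proof
  fix t assume t: "t \<in> trans A'"
  show "tr_states t \<subseteq> states A'"
  proof (cases "t \<in> trans A")
    case True
    then show ?thesis
      using assms unfolding eval_auto_def trans_in_states_def by blast
  next
    case False
    then obtain l q g qs where "t = TL l q" "TO g qs q \<in> trans A'"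
      using assms(1) t unfolding eval_auto_def by blast
    moreover from this have "TO g qs q \<in> trans A"
      using assms(1) unfolding eval_auto_def by blast
    ultimately show ?thesis
      using assms unfolding eval_auto_def trans_in_states_def by fastforce
  qed
qed

lemma cstep_simulation: "cstep D R Solve A A' \<Longrightarrow> run_simulation D A A' id"
  using cstep_trans_mono cstep_finals by (metis run_simulation_id order_refl)

lemma comp_step_simulation:
  assumes "comp_step D R E Solve A A'"
  obtains h where "run_simulation D A A' h"
proof -
  obtain A0 A1 A2 where "eval_auto D A A0" "cstep D R Solve A0 A1" "merge_nf D E A1 A2"
    "eval_auto D A2 A'"
    using assms unfolding comp_step_def by blast
  moreover obtain h where "run_simulation D A1 A2 h"
    using merge_steps_simulation calculation(3) unfolding merge_nf_def by blast
  ultimately show thesis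
    using that run_simulation_comp eval_auto_simulation cstep_simulation by metis
qed

lemma comp_step_trans_in_states:
  "comp_step D R E Solve A A' \<Longrightarrow> trans_in_states A \<Longrightarrow> trans_in_states A'"
  unfolding comp_step_def merge_nf_def
  using eval_auto_trans_in_states cstep_trans_in_states merge_steps_trans_in_states by metis

lemma comp_step_lang_A_mono:
  assumes "valid_dom D" "comp_step D R E Solve A A'"
  shows "lang_A D A \<subseteq> lang_A D A'"
proof -
  obtain h where "run_simulation D A A' h"
    using comp_step_simulation[OF assms(2)] .
  then show ?thesis
    by (rule lang_A_run_simulation[OF assms(1)])
qed

section \<open>Soundness of completion\<close>

lemma rstep_closed_at_fixpoint:
  fixes s t :: "('f,'o,'d,'v) trm" and R :: "('f,'o,'d,'v) crule set"
  assumes vd: "valid_dom D" and ss: "sound_solver D Solve" and ct: "ctrs R" and ll: "left_linear R"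
    and A: "trans_in_states A" and fixpoint: "comp_step D R E Solve A A"
    and s: "s \<in> lang_A D A" and st: "rstep D R s t"
  shows "t \<in> lang_A D A"
proof -
  obtain A0 A1 A2 where A0: "eval_auto D A A0" and A1: "cstep D R Solve A0 A1"
    and A2: "merge_nf D E A1 A2" "eval_auto D A2 A"
    using fixpoint unfolding comp_step_def by blast
  obtain qf where qf: "qf \<in> finals A" "s \<in> lang D A qf"
    using s unfolding lang_A_def by blast
  then obtain b where b: "ground s" "tle D (absT D (\<lambda>_. undefined) s) b" "run D A b qf"
    unfolding lang_def by blast
  have t: "t \<in> lang D A1 qf"
  proof (rule cstep_simulates_rstep[OF vd ss ct ll _ A1 st])
    show "trans_in_states A0"
      using eval_auto_trans_in_states[OF A0 A] .
    show "approx D s b"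
      using tle_absT_imp_approx[OF vd b(1,2)] .
    show "run D A0 b qf"
      using run_mono[OF b(3)] A0 unfolding eval_auto_def by blast
  qed
  obtain h where "run_simulation D A1 A2 h"
    using merge_steps_simulation A2(1) unfolding merge_nf_def by blast
  then have h: "run_simulation D A1 A h"
    using run_simulation_comp eval_auto_simulation[OF A2(2)] by fastforce
  have "t \<in> lang D A (h qf)"
    using lang_run_simulation[OF vd h t] .
  moreover have "qf \<in> finals A1"
    using qf(1) A0 cstep_finals[OF A1] unfolding eval_auto_def by simp
  then have "h qf \<in> finals A"
    using h unfolding run_simulation_def by blast
  ultimately show ?thesis
    unfolding lang_A_def by blast
qed

lemma rstar_subset_if_rstep_closed:
  assumes "L \<subseteq> M" and closed: "\<And>s t. s \<in> M \<Longrightarrow> rstep D R s t \<Longrightarrow> t \<in> M"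
  shows "rstar D R L \<subseteq> M"
proof
  fix t assume "t \<in> rstar D R L"
  then obtain s where s: "s \<in> L" and steps: "(rstep D R)\<^sup>*\<^sup>* s t"
    unfolding rstar_def by blast
  from steps show "t \<in> M"
  proof (induction rule: rtranclp_induct)
    case base
    then show ?case
      using s assms(1) by blast
  next
    case (step y z)
    then show ?case
      using closed by blast
  qed
qed

lemma completion_terminates_fixpoint:
  assumes "wf_lta A" "completion_terminates D R E Solve A Astar"
  shows "comp_step D R E Solve Astar Astar" "trans_in_states Astar"
proof -
  obtain seq k where seq: "seq 0 = A" "\<forall>i\<le>k. comp_step D R E Solve (seq i) (seq (Suc i))"
    "seq (Suc k) = seq k" "Astar = seq k"
    using assms(2) unfolding completion_terminates_def by blast
  then show "comp_step D R E Solve Astar Astar"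
    by fastforce
  have "trans_in_states (seq i)" if "i \<le> k" for i
    using that
  proof (induction i)
    case 0
    show ?case
      using assms(1) seq(1) unfolding wf_lta_def trans_in_states_def by simp
  next
    case (Suc i)
    then have "comp_step D R E Solve (seq i) (seq (Suc i))" "trans_in_states (seq i)"
      using seq(2) by simp_all
    then show ?case
      by (rule comp_step_trans_in_states)
  qed
  then show "trans_in_states Astar"
    using seq(4) by simp
qed

lemma completion_terminates_lang_A_mono:
  assumes "valid_dom D" "completion_terminates D R E Solve A Astar"
  shows "lang_A D A \<subseteq> lang_A D Astar"
proof -
  obtain seq k where seq: "seq 0 = A" "\<forall>i\<le>k. comp_step D R E Solve (seq i) (seq (Suc i))"
    "Astar = seq k"
    using assms(2) unfolding completion_terminates_def by blast
  have "lang_A D A \<subseteq> lang_A D (seq i)" if "i \<le> k" for i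
    using that
  proof (induction i)
    case (Suc i)
    then show ?case
      using seq(2) comp_step_lang_A_mono[OF assms(1)] by (meson Suc_leD order_trans)
  qed (simp add: seq(1))
  then show ?thesis
    using seq(3) by blast
qed

theorem mainTheorem6:
  fixes D :: "('d,'o,'l::complete_lattice) absdom"
    and R :: "('f,'o,'d,'v) crule set"
    and E :: "('f,'o,'d,'v) ceqn set"
    and Solve :: "('f,'o,'d,'l,'q,'v) solver"
    and A Astar :: "('f,'o,'l,'q) lta"
  assumes "valid_dom D"
    and "ctrs R" and "left_linear R"
    and "linear_eqs E"
    and "wf_lta A"
    and "sound_solver D Solve"
    and "completion_terminates D R E Solve A Astar"
  shows "rstar D R (lang_A D A :: ('f,'o,'d,'v) trm set) \<subseteq> lang_A D Astar"
proof -
  have fixpoint: "comp_step D R E Solve Astar Astar" and Astar: "trans_in_states Astar"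
    using completion_terminates_fixpoint[OF assms(5,7)] by blast+
  show ?thesis
  proof (rule rstar_subset_if_rstep_closed)
    show "lang_A D A \<subseteq> lang_A D Astar"
      using completion_terminates_lang_A_mono[OF assms(1,7)] .
    fix s t :: "('f,'o,'d,'v) trm"
    assume "s \<in> lang_A D Astar" "rstep D R s t"
    then show "t \<in> lang_A D Astar"
      by (rule rstep_closed_at_fixpoint[OF assms(1,6,2,3) Astar fixpoint])
  qed
qed

end
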